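(* Let $X$ be a nonempty set, $\circ:X\times X\to X$ a binary operation, and $p,q>0$ constants. Let $n\geq 1$ and let $f_1,\dots,f_n:X\to\mathbb{R}$ be $(\circ,p,q)$-convex functions such that \[ 0\leq \max(f_1(x),\dots,f_n(x))\qquad (x\in X). \] Then there exist $\lambda_1,\dots,\lambda_n\geq 0$ with $\lambda_1+\dots+\lambda_n=1$ such that \[ 0\leq \lambda_1 f_1(x)+\dots+\lambda_n f_n(x)\qquad (x\in X). \]
   Context: Given a nonempty set $X$, a binary operation $\circ:X\times X\to X$ and constants $p,q>0$, a function $f:X\to\mathbb{R}$ is called $(\circ,p,q)$-convex if $f(x\circ y)\leq p f(x)+q f(y)$ for all $x,y\in X$. *)

theory Defs
  imports Main "HOL-Analysis.Analysis"
begin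

definition opq_convex :: "'a set \<Rightarrow> ('a \<Rightarrow> 'a \<Rightarrow> 'a) \<Rightarrow> real \<Rightarrow> real \<Rightarrow> ('a \<Rightarrow> real) \<Rightarrow> bool" where
  "opq_convex X op p q f \<longleftrightarrow> (\<forall>x\<in>X. \<forall>y\<in>X. f (op x y) \<le> p * f x + q * f y)"

end

theory Submission
  imports Defs
begin

text \<open>
  For two functions f, g the heart of the matter is the cross inequality
  g y * f x \<le> g x * f y whenever f x < 0 and g y < 0. It says that every lower bound
  -g y / (f y - g y) on a mixing weight w lies below every upper bound g x / (g x - f x),
  so a weight w with w * f + (1 - w) * g \<ge> 0 exists. To prove the cross inequality,
  iterate op on x and y along binary trees: splitting [0, 1] at p / (p + q) at every level
  yields points z with h z \<le> K * (c * h x + (1 - c) * h y) simultaneously for h = f, g,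
  with c arbitrarily close to any prescribed t \<in> [0, 1]. If the inequality failed, both
  right-hand sides would be negative for all c in an open interval, contradicting
  max (f z) (g z) \<ge> 0.

  For n functions, induct on n: on the op-closed set where f 0, ..., f (m - 1) are
  negative, only f m and f (m + 1) can be nonnegative, so they may be merged into one
  (op, p, q)-convex function.
\<close>

lemma opq_convex_subset:
  "opq_convex X op p q f \<Longrightarrow> Y \<subseteq> X \<Longrightarrow> opq_convex Y op p q f"
  unfolding opq_convex_def by blast

lemma opq_convex_mixture:
  assumes "opq_convex X op p q f" "opq_convex X op p q g" "0 \<le> w" "w \<le> 1"
  shows "opq_convex X op p q (\<lambda>x. w * f x + (1 - w) * g x)"
  unfolding opq_convex_def
proof (intro ballI)
  fix x y assume "x \<in> X" "y \<in> X"
  then have "w * f (op x y) + (1 - w) * g (op x y)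
      \<le> w * (p * f x + q * f y) + (1 - w) * (p * g x + q * g y)"
    using assms unfolding opq_convex_def by (intro add_mono mult_left_mono) auto
  also have "\<dots> = p * (w * f x + (1 - w) * g x) + q * (w * f y + (1 - w) * g y)"
    by (simp add: algebra_simps)
  finally show "w * f (op x y) + (1 - w) * g (op x y)
      \<le> p * (w * f x + (1 - w) * g x) + q * (w * f y + (1 - w) * g y)" .
qed

lemma opq_convex_negative_set_closed:
  assumes closed: "\<And>x y. x \<in> X \<Longrightarrow> y \<in> X \<Longrightarrow> op x y \<in> X"
    and convex: "\<And>i. i \<in> I \<Longrightarrow> opq_convex X op p q (f i)" and "p > 0" "q > 0"
    and "x \<in> {z\<in>X. \<forall>i\<in>I. f i z < 0}" "y \<in> {z\<in>X. \<forall>i\<in>I. f i z < 0}"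
  shows "op x y \<in> {z\<in>X. \<forall>i\<in>I. f i z < 0}"
proof -
  have "f i (op x y) < 0" if "i \<in> I" for i
  proof -
    have "f i (op x y) \<le> p * f i x + q * f i y"
      using convex[OF that] assms(5,6) unfolding opq_convex_def by blast
    moreover have "p * f i x < 0" "q * f i y < 0"
      using assms(3-6) that by (auto simp: mult_pos_neg)
    ultimately show ?thesis by linarith
  qed
  then show ?thesis using closed assms(5,6) by blast
qed

definition mix_bound :: "'a set \<Rightarrow> ('a \<Rightarrow> real) set \<Rightarrow> 'a \<Rightarrow> 'a \<Rightarrow> real \<Rightarrow> real \<Rightarrow> bool" where
  "mix_bound X F x y a b \<longleftrightarrow> (\<exists>z\<in>X. \<forall>h\<in>F. h z \<le> a * h x + b * h y)"

lemma mix_bound_left: "x \<in> X \<Longrightarrow> mix_bound X F x y 1 0"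
  unfolding mix_bound_def by auto

lemma mix_bound_right: "y \<in> X \<Longrightarrow> mix_bound X F x y 0 1"
  unfolding mix_bound_def by auto

lemma mix_bound_op:
  assumes closed: "\<And>x y. x \<in> X \<Longrightarrow> y \<in> X \<Longrightarrow> op x y \<in> X"
    and convex: "\<And>h. h \<in> F \<Longrightarrow> opq_convex X op p q h" and "p \<ge> 0" "q \<ge> 0"
    and "mix_bound X F x y a1 b1" "mix_bound X F x y a2 b2"
  shows "mix_bound X F x y (p * a1 + q * a2) (p * b1 + q * b2)"
proof -
  obtain z1 z2 where z: "z1 \<in> X" "z2 \<in> X"
    "\<forall>h\<in>F. h z1 \<le> a1 * h x + b1 * h y" "\<forall>h\<in>F. h z2 \<le> a2 * h x + b2 * h y"
    using assms(5,6) unfolding mix_bound_def by blast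
  have "h (op z1 z2) \<le> (p * a1 + q * a2) * h x + (p * b1 + q * b2) * h y" if "h \<in> F" for h
  proof -
    have "h (op z1 z2) \<le> p * h z1 + q * h z2"
      using convex[OF that] z(1,2) unfolding opq_convex_def by blast
    also have "\<dots> \<le> p * (a1 * h x + b1 * h y) + q * (a2 * h x + b2 * h y)"
      using z(3,4) that \<open>p \<ge> 0\<close> \<open>q \<ge> 0\<close> by (intro add_mono mult_left_mono) auto
    finally show ?thesis by (simp add: algebra_simps)
  qed
  then show ?thesis unfolding mix_bound_def using closed[OF z(1,2)] by blast
qed

lemma mix_bound_scale:
  assumes closed: "\<And>x y. x \<in> X \<Longrightarrow> y \<in> X \<Longrightarrow> op x y \<in> X"
    and convex: "\<And>h. h \<in> F \<Longrightarrow> opq_convex X op p q h" and "p \<ge> 0" "q \<ge> 0"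
    and "mix_bound X F x y a b"
  shows "mix_bound X F x y ((p + q) ^ n * a) ((p + q) ^ n * b)"
proof (induction n)
  case 0
  show ?case using \<open>mix_bound X F x y a b\<close> by simp
next
  case (Suc n)
  then show ?case
    using mix_bound_op[where op = op, OF closed convex \<open>p \<ge> 0\<close> \<open>q \<ge> 0\<close> Suc Suc]
    by (simp add: algebra_simps)
qed

definition mix_approx :: "'a set \<Rightarrow> ('a \<Rightarrow> real) set \<Rightarrow> 'a \<Rightarrow> 'a \<Rightarrow> real \<Rightarrow> real \<Rightarrow> bool" where
  "mix_approx X F x y P E \<longleftrightarrow>
     (\<forall>t\<in>{0..1}. \<exists>a b. mix_bound X F x y a b \<and> a + b = P \<and> \<bar>a - t * P\<bar> \<le> E)"

text \<open>Split [0, 1] at p / (p + q): a weight below it is approached by combining (with op)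
  an approximation of t (p + q) / p with the endpoint y, a weight above it by combining
  the endpoint x with an approximation of (t (p + q) - p) / q.\<close>

lemma mix_approx_step:
  assumes closed: "\<And>x y. x \<in> X \<Longrightarrow> y \<in> X \<Longrightarrow> op x y \<in> X"
    and convex: "\<And>h. h \<in> F \<Longrightarrow> opq_convex X op p q h" and p: "p > 0" and q: "q > 0"
    and approx: "mix_approx X F x y P E"
    and left: "mix_bound X F x y P 0" and right: "mix_bound X F x y 0 P"
  shows "mix_approx X F x y ((p + q) * P) (max p q * E)"
  unfolding mix_approx_def
proof
  fix t :: real assume "t \<in> {0..1}"
  then have t: "0 \<le> t" "t \<le> 1" by auto
  have err: "\<bar>r * a - r * s\<bar> \<le> max p q * E" if "0 < r" "r \<le> max p q" "\<bar>a - s\<bar> \<le> E" for r a s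
  proof -
    have "\<bar>r * a - r * s\<bar> = r * \<bar>a - s\<bar>"
      using that by (simp add: abs_mult flip: right_diff_distrib)
    also have "\<dots> \<le> max p q * E"
      using that by (intro mult_mono) auto
    finally show ?thesis .
  qed
  show "\<exists>a b. mix_bound X F x y a b \<and> a + b = (p + q) * P
    \<and> \<bar>a - t * ((p + q) * P)\<bar> \<le> max p q * E"
  proof (cases "t * (p + q) \<le> p")
    case True
    define t' where "t' = t * (p + q) / p"
    have "t' \<in> {0..1}" unfolding t'_def using True t p q by auto
    then obtain a b where ab: "mix_bound X F x y a b" "a + b = P" "\<bar>a - t' * P\<bar> \<le> E"
      using approx unfolding mix_approx_def by blast
    have "t * ((p + q) * P) = p * (t' * P)"
      unfolding t'_def using p by simp
    then have "\<bar>p * a - t * ((p + q) * P)\<bar> \<le> max p q * E"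
      using err[OF p max.cobounded1 ab(3)] by (simp only:)
    moreover have "mix_bound X F x y (p * a) (p * b + q * P)"
      using mix_bound_op[where op = op, OF closed convex _ _ ab(1) right] p q by simp
    moreover have "p * a + (p * b + q * P) = (p + q) * P"
      by (simp add: ab(2)[symmetric] algebra_simps)
    ultimately show ?thesis by blast
  next
    case False
    define t' where "t' = (t * (p + q) - p) / q"
    have "t * (p + q) \<le> p + q"
      using t p q by (simp add: mult_left_le_one_le)
    then have "t' \<in> {0..1}"
      unfolding t'_def using False q by (simp add: field_simps)
    then obtain a b where ab: "mix_bound X F x y a b" "a + b = P" "\<bar>a - t' * P\<bar> \<le> E"
      using approx unfolding mix_approx_def by blast
    have "t * ((p + q) * P) = p * P + q * (t' * P)"
      unfolding t'_def using q by (simp add: field_simps)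
    then have "\<bar>p * P + q * a - t * ((p + q) * P)\<bar> \<le> max p q * E"
      using err[OF q max.cobounded2 ab(3)] by (simp only: add_diff_cancel_left)
    moreover have "mix_bound X F x y (p * P + q * a) (q * b)"
      using mix_bound_op[where op = op, OF closed convex _ _ left ab(1)] p q by simp
    moreover have "p * P + q * a + q * b = (p + q) * P"
      by (simp add: ab(2)[symmetric] algebra_simps)
    ultimately show ?thesis by blast
  qed
qed

lemma mix_approx_power:
  assumes closed: "\<And>x y. x \<in> X \<Longrightarrow> y \<in> X \<Longrightarrow> op x y \<in> X"
    and convex: "\<And>h. h \<in> F \<Longrightarrow> opq_convex X op p q h" and p: "p > 0" and q: "q > 0"
    and "x \<in> X" "y \<in> X"
  shows "mix_approx X F x y ((p + q) ^ n) (max p q ^ n)"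
proof (induction n)
  case 0
  show ?case unfolding mix_approx_def
  proof
    fix t :: real assume "t \<in> {0..1}"
    then have "mix_bound X F x y 1 0 \<and> 1 + 0 = (p + q) ^ 0 \<and> \<bar>1 - t * (p + q) ^ 0\<bar> \<le> max p q ^ 0"
      using mix_bound_left[OF \<open>x \<in> X\<close>] by auto
    then show "\<exists>a b. mix_bound X F x y a b \<and> a + b = (p + q) ^ 0
      \<and> \<bar>a - t * (p + q) ^ 0\<bar> \<le> max p q ^ 0"
      by blast
  qed
next
  case (Suc n)
  have "p \<ge> 0" "q \<ge> 0" using p q by auto
  then have "mix_bound X F x y ((p + q) ^ n) 0" "mix_bound X F x y 0 ((p + q) ^ n)"
    using mix_bound_scale[where op = op and n = n, OF closed convex _ _ mix_bound_left[OF \<open>x \<in> X\<close>]]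
      mix_bound_scale[where op = op and n = n, OF closed convex _ _ mix_bound_right[OF \<open>y \<in> X\<close>]]
    by simp_all
  then show ?case
    using mix_approx_step[where op = op, OF closed convex p q Suc] by simp
qed

lemma opq_convex_dense_mixture:
  assumes closed: "\<And>x y. x \<in> X \<Longrightarrow> y \<in> X \<Longrightarrow> op x y \<in> X"
    and convex: "\<And>h. h \<in> F \<Longrightarrow> opq_convex X op p q h"
    and p: "p > 0" and q: "q > 0" and "x \<in> X" "y \<in> X" "0 \<le> t" "t \<le> 1" "e > 0"
  shows "\<exists>z\<in>X. \<exists>c K. \<bar>c - t\<bar> < e \<and> K > 0
    \<and> (\<forall>h\<in>F. h z \<le> K * (c * h x + (1 - c) * h y))"
proof -
  have "max p q / (p + q) < 1" using p q by (simp add: max_def)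
  then obtain n where n: "(max p q / (p + q)) ^ n < e"
    using real_arch_pow_inv \<open>e > 0\<close> by blast
  define K where "K = (p + q) ^ n"
  have K: "K > 0" unfolding K_def using p q by simp
  have "t \<in> {0..1}" using \<open>0 \<le> t\<close> \<open>t \<le> 1\<close> by simp
  then obtain a b where ab: "mix_bound X F x y a b" "a + b = K" "\<bar>a - t * K\<bar> \<le> max p q ^ n"
    using mix_approx_power[where op = op and n = n, OF closed convex p q \<open>x \<in> X\<close> \<open>y \<in> X\<close>]
    unfolding K_def mix_approx_def by blast
  then obtain z where z: "z \<in> X" "\<forall>h\<in>F. h z \<le> a * h x + b * h y"
    unfolding mix_bound_def by blast
  have "\<bar>a / K - t\<bar> = \<bar>a - t * K\<bar> / K"
    using K by (simp add: field_simps)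
  also have "\<dots> \<le> max p q ^ n / K"
    using ab(3) K by (simp add: divide_right_mono)
  also have "\<dots> < e"
    using n unfolding K_def by (simp add: power_divide)
  finally have "\<bar>a / K - t\<bar> < e" .
  moreover have "a * h x + b * h y = K * (a / K * h x + (1 - a / K) * h y)" for h
    using K ab(2) by (auto simp: distrib_left right_diff_distrib)
  ultimately show ?thesis
    using z K by (intro bexI[of _ z] exI[of _ "a / K"] exI[of _ K]) auto
qed

lemma opq_convex_cross_ineq:
  assumes closed: "\<And>x y. x \<in> X \<Longrightarrow> y \<in> X \<Longrightarrow> op x y \<in> X"
    and "opq_convex X op p q f" "opq_convex X op p q g" "p > 0" "q > 0"
    and alt: "\<And>z. z \<in> X \<Longrightarrow> 0 \<le> f z \<or> 0 \<le> g z"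
    and x: "x \<in> X" "f x < 0" and y: "y \<in> X" "g y < 0"
  shows "g y * f x \<le> g x * f y"
proof (rule ccontr)
  assume neg: "\<not> g y * f x \<le> g x * f y"
  have "0 \<le> f y" "0 \<le> g x" using alt x y by force+
  \<comment> \<open>the zeros of c \<mapsto> c * f x + (1 - c) * f y and of c \<mapsto> c * g x + (1 - c) * g y\<close>
  define cf where "cf = f y / (f y - f x)"
  define cg where "cg = - g y / (g x - g y)"
  have "f y - f x > 0" "g x - g y > 0" using x y \<open>0 \<le> f y\<close> \<open>0 \<le> g x\<close> by auto
  then have "0 \<le> cf" "cg \<le> 1" "cf < cg"
    using \<open>0 \<le> f y\<close> \<open>0 \<le> g x\<close> neg unfolding cf_def cg_def by (auto simp: field_simps)
  then obtain z c K where z: "z \<in> X" "\<bar>c - (cf + cg) / 2\<bar> < (cg - cf) / 2" "K > 0"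
      "\<forall>h\<in>{f, g}. h z \<le> K * (c * h x + (1 - c) * h y)"
    using opq_convex_dense_mixture[where op = op and F = "{f, g}"
        and t = "(cf + cg) / 2" and e = "(cg - cf) / 2", OF closed _ \<open>p > 0\<close> \<open>q > 0\<close> x(1) y(1)]
      assms(2,3) by auto
  have "cf < c" "c < cg" using z(2) by (simp_all add: abs_less_iff field_simps)
  then have "c * f x + (1 - c) * f y < 0" "c * g x + (1 - c) * g y < 0"
    using \<open>f y - f x > 0\<close> \<open>g x - g y > 0\<close> unfolding cf_def cg_def by (auto simp: field_simps)
  then have "f z < 0" "g z < 0"
    using z(3,4) by (auto intro: le_less_trans mult_pos_neg)
  then show False using alt[OF z(1)] by simp
qed

lemma real_between_bounds:
  fixes A B :: "real set"
  assumes "\<And>a. a \<in> A \<Longrightarrow> a \<le> 1" "\<And>b. b \<in> B \<Longrightarrow> 0 \<le> b"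
    and "\<And>a b. a \<in> A \<Longrightarrow> b \<in> B \<Longrightarrow> a \<le> b"
  shows "\<exists>w. 0 \<le> w \<and> w \<le> 1 \<and> (\<forall>a\<in>A. a \<le> w) \<and> (\<forall>b\<in>B. w \<le> b)"
proof -
  define w where "w = Sup (insert 0 A)"
  have bdd: "bdd_above (insert 0 A)" using assms(1) by (intro bdd_aboveI[of _ 1]) auto
  have "0 \<le> w" "\<forall>a\<in>A. a \<le> w" unfolding w_def using bdd by (auto intro: cSup_upper)
  moreover have "w \<le> 1" "\<forall>b\<in>B. w \<le> b" unfolding w_def using assms by (auto intro: cSup_least)
  ultimately show ?thesis by blast
qed

lemma nonneg_mixture_of_two:
  fixes f g :: "'a \<Rightarrow> real"
  assumes alt: "\<And>z. z \<in> X \<Longrightarrow> 0 \<le> f z \<or> 0 \<le> g z"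
    and cross: "\<And>x y. x \<in> X \<Longrightarrow> y \<in> X \<Longrightarrow> f x < 0 \<Longrightarrow> g y < 0
      \<Longrightarrow> g y * f x \<le> g x * f y"
  shows "\<exists>w. 0 \<le> w \<and> w \<le> 1 \<and> (\<forall>x\<in>X. 0 \<le> w * f x + (1 - w) * g x)"
proof -
  let ?A = "(\<lambda>y. - g y / (f y - g y)) ` {y\<in>X. g y < 0}"
  let ?B = "(\<lambda>x. g x / (g x - f x)) ` {x\<in>X. f x < 0}"
  have "- g y / (f y - g y) \<le> 1" if "y \<in> X" "g y < 0" for y
    using alt[of y] that by (auto simp: field_simps)
  moreover have "0 \<le> g x / (g x - f x)" if "x \<in> X" "f x < 0" for x
    using alt[of x] that by auto
  moreover have "- g y / (f y - g y) \<le> g x / (g x - f x)"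
    if "x \<in> X" "f x < 0" "y \<in> X" "g y < 0" for x y
    using alt[of x] alt[of y] cross[of x y] that by (auto simp: field_simps)
  ultimately obtain w where w: "0 \<le> w" "w \<le> 1" "\<forall>a\<in>?A. a \<le> w" "\<forall>b\<in>?B. w \<le> b"
    using real_between_bounds[of ?A ?B] by blast
  have "0 \<le> w * f x + (1 - w) * g x" if "x \<in> X" for x
  proof -
    consider "g x < 0" | "f x < 0" | "0 \<le> f x" "0 \<le> g x" by linarith
    then show ?thesis
    proof cases
      case 1
      then have "- g x / (f x - g x) \<le> w" "0 \<le> f x" using w(3) alt[OF that] that by auto
      then show ?thesis using 1 by (simp add: field_simps)
    next
      case 2
      then have "w \<le> g x / (g x - f x)" "0 \<le> g x" using w(4) alt[OF that] that by auto
      then show ?thesis using 2 by (simp add: field_simps)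
    qed (use w in simp)
  qed
  then show ?thesis using w by blast
qed

lemma sum_lessThan_split_last_weight:
  fixes \<mu> c :: "nat \<Rightarrow> real"
  shows "(\<Sum>i<Suc (Suc m). (\<mu>(m := \<mu> m * w, Suc m := \<mu> m * (1 - w))) i * c i)
    = (\<Sum>i<m. \<mu> i * c i) + \<mu> m * (w * c m + (1 - w) * c (Suc m))"
proof -
  have "(\<Sum>i<m. (\<mu>(m := \<mu> m * w, Suc m := \<mu> m * (1 - w))) i * c i) = (\<Sum>i<m. \<mu> i * c i)"
    by (intro sum.cong) auto
  then show ?thesis by (simp add: algebra_simps)
qed

lemma opq_convex_merge_last_two:
  assumes closed: "\<And>x y. x \<in> X \<Longrightarrow> y \<in> X \<Longrightarrow> op x y \<in> X"
    and p: "p > 0" and q: "q > 0"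
    and convex: "\<And>i. i < Suc (Suc m) \<Longrightarrow> opq_convex X op p q (f i)"
    and alt: "\<And>x. x \<in> X \<Longrightarrow> \<exists>i<Suc (Suc m). 0 \<le> f i x"
  shows "\<exists>w. 0 \<le> w \<and> w \<le> 1
    \<and> (\<forall>x\<in>X. (\<exists>i<m. 0 \<le> f i x) \<or> 0 \<le> w * f m x + (1 - w) * f (Suc m) x)"
proof -
  define Y where "Y = {z\<in>X. \<forall>i\<in>{..<m}. f i z < 0}"
  have "opq_convex X op p q (f i)" if "i \<in> {..<m}" for i
    using convex that by simp
  then have closed_Y: "op x y \<in> Y" if "x \<in> Y" "y \<in> Y" for x y
    using opq_convex_negative_set_closed[where op = op, OF closed _ p q] that
    unfolding Y_def by blast
  have "Y \<subseteq> X" unfolding Y_def by blast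
  then have convex_Y: "opq_convex Y op p q (f m)" "opq_convex Y op p q (f (Suc m))"
    using convex[of m] convex[of "Suc m"] by (simp_all add: opq_convex_subset)
  have alt_Y: "0 \<le> f m z \<or> 0 \<le> f (Suc m) z" if z: "z \<in> Y" for z
  proof -
    obtain i where "i < Suc (Suc m)" "0 \<le> f i z"
      using alt[of z] z unfolding Y_def by blast
    moreover have "\<not> i < m" using z \<open>0 \<le> f i z\<close> unfolding Y_def by force
    ultimately show ?thesis by (auto simp: less_Suc_eq)
  qed
  have "f (Suc m) y * f m x \<le> f (Suc m) x * f m y"
    if "x \<in> Y" "f m x < 0" "y \<in> Y" "f (Suc m) y < 0" for x y
    using opq_convex_cross_ineq[where op = op, OF closed_Y convex_Y p q alt_Y that] .
  then obtain w where w: "0 \<le> w" "w \<le> 1" "\<forall>x\<in>Y. 0 \<le> w * f m x + (1 - w) * f (Suc m) x"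
    using nonneg_mixture_of_two[of Y "f m" "f (Suc m)"] alt_Y by blast
  moreover have "\<exists>i<m. 0 \<le> f i x" if "x \<in> X" "x \<notin> Y" for x
    using that unfolding Y_def by (auto simp: not_less)
  ultimately show ?thesis by blast
qed

lemma opq_convex_nonneg_mixture:
  assumes closed: "\<And>x y. x \<in> X \<Longrightarrow> y \<in> X \<Longrightarrow> op x y \<in> X"
    and p: "p > 0" and q: "q > 0"
    and convex: "\<And>i. i < Suc m \<Longrightarrow> opq_convex X op p q (f i)"
    and alt: "\<And>x. x \<in> X \<Longrightarrow> \<exists>i<Suc m. 0 \<le> f i x"
  shows "\<exists>l. (\<forall>i<Suc m. 0 \<le> l i) \<and> (\<Sum>i<Suc m. l i) = 1
    \<and> (\<forall>x\<in>X. 0 \<le> (\<Sum>i<Suc m. l i * f i x))"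
  using convex alt
proof (induction m arbitrary: f)
  case 0
  then show ?case by (intro exI[of _ "\<lambda>_. 1"]) auto
next
  case (Suc m)
  obtain w where w: "0 \<le> w" "w \<le> 1"
    "\<forall>x\<in>X. (\<exists>i<m. 0 \<le> f i x) \<or> 0 \<le> w * f m x + (1 - w) * f (Suc m) x"
    using opq_convex_merge_last_two[where op = op, OF closed p q Suc.prems] by blast
  define h where "h = f(m := \<lambda>x. w * f m x + (1 - w) * f (Suc m) x)"
  have "opq_convex X op p q (h i)" if "i < Suc m" for i
  proof (cases "i = m")
    case True
    then show ?thesis
      using opq_convex_mixture[OF Suc.prems(1)[of m] Suc.prems(1)[of "Suc m"] w(1,2)]
      unfolding h_def by simp
  next
    case False
    then show ?thesis using Suc.prems(1)[of i] that unfolding h_def by simp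
  qed
  moreover have "\<exists>i<Suc m. 0 \<le> h i x" if "x \<in> X" for x
    using w(3) that unfolding h_def by (metis fun_upd_other fun_upd_same less_Suc_eq nat_neq_iff)
  ultimately obtain \<mu> where \<mu>: "\<forall>i<Suc m. 0 \<le> \<mu> i" "(\<Sum>i<Suc m. \<mu> i) = 1"
      "\<forall>x\<in>X. 0 \<le> (\<Sum>i<Suc m. \<mu> i * h i x)"
    using Suc.IH by blast
  define l where "l = \<mu>(m := \<mu> m * w, Suc m := \<mu> m * (1 - w))"
  have "\<forall>i<Suc (Suc m). 0 \<le> l i"
    using \<mu>(1) w(1,2) unfolding l_def by (auto simp: less_Suc_eq)
  moreover have "(\<Sum>i<Suc (Suc m). l i) = 1"
    using sum_lessThan_split_last_weight[where c = "\<lambda>_. 1" and m = m and \<mu> = \<mu> and w = w] \<mu>(2)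
    unfolding l_def by simp
  moreover have "(\<Sum>i<Suc (Suc m). l i * f i x) = (\<Sum>i<Suc m. \<mu> i * h i x)" for x
  proof -
    have "(\<Sum>i<m. \<mu> i * h i x) = (\<Sum>i<m. \<mu> i * f i x)"
      unfolding h_def by (intro sum.cong) auto
    then show ?thesis
      using sum_lessThan_split_last_weight[where c = "\<lambda>i. f i x" and m = m and \<mu> = \<mu> and w = w]
      unfolding l_def h_def by simp
  qed
  ultimately show ?case using \<mu>(3) by auto
qed

theorem theorem3p3:
  fixes X :: "'a set" and op :: "'a \<Rightarrow> 'a \<Rightarrow> 'a" and p q :: real
    and n :: nat and f :: "nat \<Rightarrow> 'a \<Rightarrow> real"
  assumes "X \<noteq> {}"
    and "\<And>x y. x \<in> X \<Longrightarrow> y \<in> X \<Longrightarrow> op x y \<in> X"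
    and "p > 0" and "q > 0"
    and "n \<ge> 1"
    and "\<And>i. i < n \<Longrightarrow> opq_convex X op p q (f i)"
    and "\<And>x. x \<in> X \<Longrightarrow> 0 \<le> Max ((\<lambda>i. f i x) ` {..<n})"
  shows "\<exists>l :: nat \<Rightarrow> real. (\<forall>i<n. l i \<ge> 0) \<and> (\<Sum>i<n. l i) = 1 \<and>
           (\<forall>x\<in>X. 0 \<le> (\<Sum>i<n. l i * f i x))"
proof -
  obtain m where n: "n = Suc m" using \<open>n \<ge> 1\<close> by (cases n) auto
  have "\<exists>i<Suc m. 0 \<le> f i x" if "x \<in> X" for x
    using assms(7)[OF that] unfolding n by (subst (asm) Max_ge_iff) auto
  then show ?thesis
    using opq_convex_nonneg_mixture[where op = op, OF assms(2-4)] assms(6) unfolding n by blast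
qed

end
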